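(* Let $\mathcal{G}=(\mathcal{V},\mathcal{A})$ be the information-flow graph of a single-sender single-uniprior index-coding instance with message lengths $q_1,\dots,q_n$. Then \[ \ell^*(\mathcal{G}) \geq \sum_{k \in \mathcal{V}} q_k - \sum_{i \in \mathcal{L}(\mathcal{G})} q_i - \sum_{\mathcal{V}_{S} \in \mathbb{V}} \min_{a \in \mathcal{V}_{S}} q_a, \] where $\mathbb{V}$ is the set of vertex sets of all leaf SCCs of $\mathcal{G}$.
   Context: Single-sender single-uniprior index coding: there are $n$ receivers and $n$ independent messages $x_1,\dots,x_n$; message $x_i$ consists of $q_i\ge 1$ bits, each independently uniformly distributed on $\{0,1\}$. A single sender knows all messages. Receiver $i$ knows $x_i$ a priori and requests a set $\mathcal{W}_i$ of messages with $x_i\notin\mathcal{W}_i$. The information-flow graph is the directed graph $\mathcal{G}=(\mathcal{V},\mathcal{A})$ with $\mathcal{V}=\{1,\dots,n\}$ and an arc $(j\to i)\in\mathcal{A}$ iff $x_j\in\mathcal{W}_i$. An index code of length $\ell$ consists of an encoding function $E:\{0,1\}^{\sum_i q_i}\to\{0,1\}^\ell$ and, for each receiver $i$, a decoding function $D_i$ such that $D_i(E(x_1,\dots,x_n),x_i)$ equals the tuple of messages in $\mathcal{W}_i$ for all values of the messages. $\ell^*(\mathcal{G})$ denotes the minimum length of an index code. A leaf vertex is a vertex with no outgoing arcs; $\mathcal{L}(\mathcal{G})$ is the set of leaf vertices. A strongly connected component (SCC) is a maximal subgraph in which every ordered pair of vertices is joined by a directed path inside the subgraph. A leaf SCC is an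 SCC with at least two vertices from which no arc goes to a vertex outside the SCC. *)

theory Defs
  imports Main
begin

text \<open>Vertices are 1..n; an arc (j,i) in A means receiver i requests message x_j.
  A message assignment gives each message i in 1..n a bit string of length q i
  (and the empty list outside 1..n).\<close>

definition msgs :: "nat \<Rightarrow> (nat \<Rightarrow> nat) \<Rightarrow> (nat \<Rightarrow> bool list) set" where
  "msgs n q = {x. \<forall>i. (i \<in> {1..n} \<longrightarrow> length (x i) = q i) \<and> (i \<notin> {1..n} \<longrightarrow> x i = [])}"

definition is_index_code ::
  "nat \<Rightarrow> (nat \<Rightarrow> nat) \<Rightarrow> (nat \<times> nat) set \<Rightarrow> nat \<Rightarrow>
   ((nat \<Rightarrow> bool list) \<Rightarrow> bool list) \<Rightarrow>
   (nat \<Rightarrow> bool list \<Rightarrow> bool list \<Rightarrow> nat \<Rightarrow> bool list) \<Rightarrow> bool" where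
  "is_index_code n q A l E D \<longleftrightarrow>
     (\<forall>x \<in> msgs n q. length (E x) = l) \<and>
     (\<forall>x \<in> msgs n q. \<forall>i \<in> {1..n}. \<forall>j. (j, i) \<in> A \<longrightarrow> D i (E x) (x i) j = x j)"

definition opt_len :: "nat \<Rightarrow> (nat \<Rightarrow> nat) \<Rightarrow> (nat \<times> nat) set \<Rightarrow> nat" where
  "opt_len n q A = (LEAST l. \<exists>E D. is_index_code n q A l E D)"

definition leaf_vertices :: "nat \<Rightarrow> (nat \<times> nat) set \<Rightarrow> nat set" where
  "leaf_vertices n A = {i \<in> {1..n}. \<not> (\<exists>j. (i, j) \<in> A)}"

definition strongly_connected_in :: "(nat \<times> nat) set \<Rightarrow> nat set \<Rightarrow> bool" where
  "strongly_connected_in A S \<longleftrightarrow> (\<forall>u \<in> S. \<forall>v \<in> S. (u, v) \<in> (A \<inter> (S \<times> S))\<^sup>*)"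

definition is_scc :: "nat \<Rightarrow> (nat \<times> nat) set \<Rightarrow> nat set \<Rightarrow> bool" where
  "is_scc n A S \<longleftrightarrow> S \<noteq> {} \<and> S \<subseteq> {1..n} \<and> strongly_connected_in A S \<and>
     (\<forall>T. S \<subset> T \<and> T \<subseteq> {1..n} \<longrightarrow> \<not> strongly_connected_in A T)"

definition is_leaf_scc :: "nat \<Rightarrow> (nat \<times> nat) set \<Rightarrow> nat set \<Rightarrow> bool" where
  "is_leaf_scc n A S \<longleftrightarrow> is_scc n A S \<and> card S \<ge> 2 \<and>
     (\<forall>u v. u \<in> S \<and> (u, v) \<in> A \<longrightarrow> v \<in> S)"

end

theory Submission
  imports Defs "HOL-Library.FuncSet"
begin

text \<open>An arc \<open>(u, v)\<close> lets receiver \<open>v\<close> recover \<open>x\<^sub>u\<close> from the codeword and \<open>x\<^sub>v\<close>,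
  so the codeword together with the messages of a set \<open>R\<close> of vertices that every vertex
  can reach determines all messages. Counting gives \<open>\<Sum>\<^sub>k q\<^sub>k \<le> \<ell> + \<Sum>\<^sub>r\<^sub>\<in>\<^sub>R q\<^sub>r\<close>.
  Following arcs from any vertex to a vertex whose reachable set has minimal size ends in a
  closed strongly connected set, which is a leaf vertex or a leaf SCC; hence \<open>R\<close> can consist
  of the leaves together with a vertex of minimal message length from each leaf SCC.\<close>

section \<open>Counting message assignments\<close>

lemma card_bool_lists_length: "card {xs :: bool list. length xs = k} = 2 ^ k"
  using card_lists_length_eq[of "UNIV :: bool set" k] by simp

lemma finite_bool_lists_length: "finite {xs :: bool list. length xs = k}"
  using finite_lists_length_eq[of "UNIV :: bool set" k] by simp

lemma card_PiE_bool_lists: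
  "finite R \<Longrightarrow> card (PiE R (\<lambda>i. {xs :: bool list. length xs = q i})) = 2 ^ (\<Sum>i\<in>R. q i)"
  by (simp add: card_PiE card_bool_lists_length power_sum)

lemma finite_PiE_bool_lists:
  "finite R \<Longrightarrow> finite (PiE R (\<lambda>i. {xs :: bool list. length xs = q i}))"
  by (simp add: finite_PiE finite_bool_lists_length)

lemma bij_betw_restrict_msgs:
  "bij_betw (\<lambda>x. restrict x {1..n}) (msgs n q) (PiE {1..n} (\<lambda>i. {xs :: bool list. length xs = q i}))"
proof (rule bij_betw_imageI)
  show "inj_on (\<lambda>x. restrict x {1..n}) (msgs n q)"
  proof (rule inj_onI)
    fix x y assume xy: "x \<in> msgs n q" "y \<in> msgs n q" "restrict x {1..n} = restrict y {1..n}"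
    show "x = y"
    proof
      fix i show "x i = y i"
        using xy unfolding msgs_def by (cases "i \<in> {1..n}") (auto dest: fun_cong[where x=i])
    qed
  qed
  show "(\<lambda>x. restrict x {1..n}) ` msgs n q = PiE {1..n} (\<lambda>i. {xs :: bool list. length xs = q i})"
  proof
    show "(\<lambda>x. restrict x {1..n}) ` msgs n q \<subseteq> PiE {1..n} (\<lambda>i. {xs. length xs = q i})"
      unfolding msgs_def by auto
  next
    show "PiE {1..n} (\<lambda>i. {xs. length xs = q i}) \<subseteq> (\<lambda>x. restrict x {1..n}) ` msgs n q"
    proof
      fix f assume f: "f \<in> PiE {1..n} (\<lambda>i. {xs :: bool list. length xs = q i})"
      define x where "x i = (if i \<in> {1..n} then f i else [])" for i
      have "x \<in> msgs n q" using f unfolding msgs_def x_def by auto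
      moreover have "restrict x {1..n} = f"
        using f unfolding x_def by (auto simp: restrict_def PiE_def extensional_def)
      ultimately show "f \<in> (\<lambda>x. restrict x {1..n}) ` msgs n q" by force
    qed
  qed
qed

lemma finite_msgs: "finite (msgs n q)"
  using bij_betw_finite[OF bij_betw_restrict_msgs] finite_PiE_bool_lists by blast

lemma card_msgs: "card (msgs n q) = 2 ^ (\<Sum>k\<in>{1..n}. q k)"
  using bij_betw_same_card[OF bij_betw_restrict_msgs] card_PiE_bool_lists[of "{1..n}"] by simp

section \<open>Index codes\<close>

text \<open>Without some index code, \<open>opt_len\<close> would be the junk value of \<open>LEAST\<close> on an empty
  predicate; a bijection onto the bit strings of length \<open>\<Sum>\<^sub>k q\<^sub>k\<close> is one.\<close>

lemma index_code_exists: "\<exists>E D. is_index_code n q A (\<Sum>k\<in>{1..n}. q k) E D"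
proof -
  let ?W = "{cs :: bool list. length cs = (\<Sum>k\<in>{1..n}. q k)}"
  obtain E where E: "bij_betw E (msgs n q) ?W"
    using finite_same_card_bij[OF finite_msgs finite_bool_lists_length]
    by (auto simp: card_msgs card_bool_lists_length)
  define D where "D i c s = inv_into (msgs n q) E c" for i :: nat and c s :: "bool list"
  have "is_index_code n q A (\<Sum>k\<in>{1..n}. q k) E D"
    using E unfolding is_index_code_def D_def bij_betw_def by (auto simp: inv_into_f_f)
  then show ?thesis by blast
qed

lemma index_code_opt_len:
  obtains E D where "is_index_code n q A (opt_len n q A) E D"
  using LeastI_ex[of "\<lambda>l. \<exists>E D. is_index_code n q A l E D"] index_code_exists
  unfolding opt_len_def by blast

lemma index_code_decodes_along_path:
  assumes code: "is_index_code n q A l E D" and A: "A \<subseteq> {1..n} \<times> {1..n}"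
    and x: "x \<in> msgs n q" and y: "y \<in> msgs n q" and E: "E x = E y"
    and path: "(u, r) \<in> A\<^sup>*" and r: "x r = y r"
  shows "x u = y u"
  using path r
proof (induction rule: converse_rtrancl_induct)
  case base
  then show ?case by simp
next
  case (step u v)
  then have v: "v \<in> {1..n}" using A by auto
  have "x u = D v (E x) (x v) u" using code x v step(1) unfolding is_index_code_def by auto
  also have "\<dots> = D v (E y) (y v) u" using E step by simp
  also have "\<dots> = y u" using code y v step(1) unfolding is_index_code_def by auto
  finally show ?case .
qed

theorem opt_len_lower_bound:
  assumes A: "A \<subseteq> {1..n} \<times> {1..n}" and R: "R \<subseteq> {1..n}"
    and reaches_R: "\<forall>u\<in>{1..n}. \<exists>r\<in>R. (u, r) \<in> A\<^sup>*"
  shows "(\<Sum>k\<in>{1..n}. q k) \<le> opt_len n q A + (\<Sum>r\<in>R. q r)"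
proof -
  obtain E D where code: "is_index_code n q A (opt_len n q A) E D"
    by (rule index_code_opt_len)
  have finR: "finite R" using R finite_subset by blast
  define g where "g x = (E x, restrict x R)" for x
  define T where "T = {cs :: bool list. length cs = opt_len n q A}
                      \<times> PiE R (\<lambda>i. {xs :: bool list. length xs = q i})"
  have "inj_on g (msgs n q)"
  proof (rule inj_onI)
    fix x y assume x: "x \<in> msgs n q" and y: "y \<in> msgs n q" and "g x = g y"
    then have E: "E x = E y" and xy_R: "restrict x R = restrict y R" unfolding g_def by auto
    show "x = y"
    proof
      fix u show "x u = y u"
      proof (cases "u \<in> {1..n}")
        case True
        then obtain r where "r \<in> R" "(u, r) \<in> A\<^sup>*" using reaches_R by blast
        moreover have "x r = y r" using xy_R \<open>r \<in> R\<close> by (metis restrict_apply')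
        ultimately show ?thesis using index_code_decodes_along_path[OF code A x y E] by blast
      next
        case False
        then show ?thesis using x y unfolding msgs_def by auto
      qed
    qed
  qed
  moreover have "g ` msgs n q \<subseteq> T"
    using code R unfolding g_def T_def is_index_code_def msgs_def by auto
  moreover have "finite T"
    unfolding T_def using finite_PiE_bool_lists[OF finR] finite_bool_lists_length by simp
  ultimately have "card (msgs n q) \<le> card T" by (rule card_inj_on_le)
  then have "(2::nat) ^ (\<Sum>k\<in>{1..n}. q k) \<le> 2 ^ (opt_len n q A + (\<Sum>r\<in>R. q r))"
    unfolding T_def card_msgs card_cartesian_product card_bool_lists_length
      card_PiE_bool_lists[OF finR] by (simp add: power_add)
  then show ?thesis by (rule power_le_imp_le_exp[rotated]) simp
qed

section \<open>Leaf vertices and leaf SCCs\<close>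

lemma rtrancl_restrict_closed:
  assumes "(a, b) \<in> A\<^sup>*" "a \<in> S" "\<And>s t. s \<in> S \<Longrightarrow> (s, t) \<in> A \<Longrightarrow> t \<in> S"
  shows "(a, b) \<in> (A \<inter> S \<times> S)\<^sup>*"
proof -
  have "(a, b) \<in> (A \<inter> S \<times> S)\<^sup>* \<and> b \<in> S"
    using assms(1)
  proof (induction rule: rtrancl_induct)
    case base
    then show ?case using assms(2) by simp
  next
    case (step y z)
    then have "z \<in> S" using assms(3) by blast
    then show ?case using step by (meson IntI mem_Sigma_iff rtrancl.rtrancl_into_rtrancl)
  qed
  then show ?thesis by blast
qed

text \<open>A vertex \<open>w\<close> reachable from \<open>u\<close> with fewest reachable vertices can be reached back
  from everything it reaches: those reach no more than \<open>w\<close>, hence exactly the same set.\<close>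

lemma exists_reachable_bottom:
  assumes fin: "\<And>v. finite (A\<^sup>* `` {v})"
  obtains w where "(u, w) \<in> A\<^sup>*" "\<And>v. (w, v) \<in> A\<^sup>* \<Longrightarrow> (v, w) \<in> A\<^sup>*"
proof -
  obtain w where uw: "(u, w) \<in> A\<^sup>*"
    and w_min: "\<And>v. (u, v) \<in> A\<^sup>* \<Longrightarrow> card (A\<^sup>* `` {w}) \<le> card (A\<^sup>* `` {v})"
    using ex_has_least_nat[of "\<lambda>v. (u, v) \<in> A\<^sup>*" u "\<lambda>v. card (A\<^sup>* `` {v})"] by auto
  have "(v, w) \<in> A\<^sup>*" if wv: "(w, v) \<in> A\<^sup>*" for v
  proof -
    have sub: "A\<^sup>* `` {v} \<subseteq> A\<^sup>* `` {w}" using wv by (auto intro: rtrancl_trans)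
    have "card (A\<^sup>* `` {w}) \<le> card (A\<^sup>* `` {v})" using uw wv by (intro w_min) (rule rtrancl_trans)
    then have "card (A\<^sup>* `` {v}) = card (A\<^sup>* `` {w})"
      using card_mono[OF fin sub] by (rule le_antisym[rotated])
    then have "A\<^sup>* `` {v} = A\<^sup>* `` {w}" by (rule card_subset_eq[OF fin sub])
    then show ?thesis by auto
  qed
  with uw show ?thesis by (rule that)
qed

lemma reachable_subset_vertices:
  assumes "A \<subseteq> {1..n} \<times> {1..n}" "w \<in> {1..n}"
  shows "A\<^sup>* `` {w} \<subseteq> {1..n}"
proof
  fix v assume "v \<in> A\<^sup>* `` {w}"
  then have "(w, v) \<in> A\<^sup>*" by simp
  then show "v \<in> {1..n}" by (induction rule: rtrancl_induct) (use assms in auto)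
qed

lemma is_leaf_scc_reachable_bottom:
  assumes A: "A \<subseteq> {1..n} \<times> {1..n}" and w: "w \<in> {1..n}"
    and bottom: "\<And>v. (w, v) \<in> A\<^sup>* \<Longrightarrow> (v, w) \<in> A\<^sup>*"
    and two: "card (A\<^sup>* `` {w}) \<ge> 2"
  shows "is_leaf_scc n A (A\<^sup>* `` {w})"
proof -
  let ?S = "A\<^sup>* `` {w}"
  have closed: "t \<in> ?S" if "s \<in> ?S" "(s, t) \<in> A" for s t
    using that by (auto intro: rtrancl_into_rtrancl)
  have "strongly_connected_in A ?S"
    unfolding strongly_connected_in_def
  proof (intro ballI)
    fix a b assume a: "a \<in> ?S" and b: "b \<in> ?S"
    have "(a, b) \<in> A\<^sup>*" using a b bottom by (auto intro: rtrancl_trans)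
    then show "(a, b) \<in> (A \<inter> ?S \<times> ?S)\<^sup>*" using a closed by (rule rtrancl_restrict_closed)
  qed
  moreover have "\<not> strongly_connected_in A T" if psub: "?S \<subset> T" for T
  proof
    assume "strongly_connected_in A T"
    obtain t where t: "t \<in> T" "t \<notin> ?S" using psubset_imp_ex_mem[OF psub] by blast
    have "w \<in> T" using psubset_imp_subset[OF psub] by auto
    then have "(w, t) \<in> (A \<inter> T \<times> T)\<^sup>*"
      using \<open>strongly_connected_in A T\<close> t unfolding strongly_connected_in_def by blast
    then have "(w, t) \<in> A\<^sup>*" using rtrancl_mono[of "A \<inter> T \<times> T" A] by blast
    then show False using t by simp
  qed
  ultimately show ?thesis
    using reachable_subset_vertices[OF A w] two closed
    unfolding is_leaf_scc_def is_scc_def by auto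
qed

lemma reaches_leaf_or_leaf_scc:
  assumes A: "A \<subseteq> {1..n} \<times> {1..n}" and loop_free: "\<forall>i. (i, i) \<notin> A"
    and u: "u \<in> {1..n}"
  shows "(\<exists>w \<in> leaf_vertices n A. (u, w) \<in> A\<^sup>*) \<or>
         (\<exists>S. is_leaf_scc n A S \<and> (\<forall>v\<in>S. (u, v) \<in> A\<^sup>*))"
proof -
  have "A\<^sup>* `` {v} \<subseteq> insert v {1..n}" for v
    using A by (auto elim: rtranclE)
  then have fin: "finite (A\<^sup>* `` {v})" for v
    by (rule finite_subset) simp
  obtain w where uw: "(u, w) \<in> A\<^sup>*" and bottom: "\<And>v. (w, v) \<in> A\<^sup>* \<Longrightarrow> (v, w) \<in> A\<^sup>*"
    using exists_reachable_bottom[OF fin] by blast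
  have w: "w \<in> {1..n}" using reachable_subset_vertices[OF A u] uw by blast
  show ?thesis
  proof (cases "card (A\<^sup>* `` {w}) \<ge> 2")
    case True
    have "is_leaf_scc n A (A\<^sup>* `` {w})" by (rule is_leaf_scc_reachable_bottom[OF A w bottom True])
    moreover have "\<forall>v \<in> A\<^sup>* `` {w}. (u, v) \<in> A\<^sup>*" using uw by (auto intro: rtrancl_trans)
    ultimately show ?thesis by blast
  next
    case False
    then have "card (A\<^sup>* `` {w}) \<le> Suc 0" by simp
    then have "A\<^sup>* `` {w} = {w}" using card_le_Suc0_iff_eq[OF fin] by blast
    then have "(w, j) \<notin> A" for j
      using loop_free by (metis Image_singleton_iff r_into_rtrancl singletonD)
    then have "w \<in> leaf_vertices n A" using w unfolding leaf_vertices_def by auto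
    then show ?thesis using uw by blast
  qed
qed

lemma leaf_scc_nonempty_subset:
  "is_leaf_scc n A S \<Longrightarrow> S \<noteq> {} \<and> S \<subseteq> {1..n}"
  unfolding is_leaf_scc_def is_scc_def by auto

lemma finite_leaf_sccs: "finite {S. is_leaf_scc n A S}"
proof -
  have "{S. is_leaf_scc n A S} \<subseteq> Pow {1..n}" using leaf_scc_nonempty_subset by blast
  then show ?thesis by (rule finite_subset) simp
qed

lemma reaches_leaf_or_leaf_scc_representative:
  assumes A: "A \<subseteq> {1..n} \<times> {1..n}" and loop_free: "\<forall>i. (i, i) \<notin> A"
    and m: "\<forall>S. is_leaf_scc n A S \<longrightarrow> m S \<in> S" and u: "u \<in> {1..n}"
  shows "\<exists>r \<in> leaf_vertices n A \<union> m ` {S. is_leaf_scc n A S}. (u, r) \<in> A\<^sup>*"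
  using reaches_leaf_or_leaf_scc[OF A loop_free u]
proof
  assume "\<exists>w \<in> leaf_vertices n A. (u, w) \<in> A\<^sup>*"
  then show ?thesis by blast
next
  assume "\<exists>S. is_leaf_scc n A S \<and> (\<forall>v\<in>S. (u, v) \<in> A\<^sup>*)"
  then obtain S where "is_leaf_scc n A S" "\<forall>v\<in>S. (u, v) \<in> A\<^sup>*" by blast
  then show ?thesis using m by blast
qed

lemma Min_witness_choice:
  assumes "\<forall>S \<in> F. finite S \<and> S \<noteq> {}"
  obtains m where "\<forall>S \<in> F. m S \<in> S \<and> f (m S) = Min (f ` S)"
proof -
  have "\<forall>S \<in> F. \<exists>v. v \<in> S \<and> f v = Min (f ` S)"
  proof
    fix S assume "S \<in> F"
    then have "Min (f ` S) \<in> f ` S" using assms by simp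
    then show "\<exists>v. v \<in> S \<and> f v = Min (f ` S)" by force
  qed
  then have "\<exists>m. \<forall>S \<in> F. m S \<in> S \<and> f (m S) = Min (f ` S)" by (rule bchoice)
  then show ?thesis using that by blast
qed

lemma sum_Un_image_le:
  fixes f :: "'a \<Rightarrow> nat"
  assumes "finite L" "finite F"
  shows "sum f (L \<union> m ` F) \<le> sum f L + (\<Sum>S\<in>F. f (m S))"
proof -
  have "sum f (L \<union> m ` F) \<le> sum f L + sum f (m ` F)"
    using sum_Un_nat[of L "m ` F" f] assms by simp
  also have "sum f (m ` F) \<le> (\<Sum>S\<in>F. f (m S))"
    using sum_image_le[OF assms(2), of f m] by (simp add: comp_def)
  finally show ?thesis by simp
qed

theorem theorem1:
  fixes n :: nat and q :: "nat \<Rightarrow> nat" and A :: "(nat \<times> nat) set"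
  assumes "A \<subseteq> {1..n} \<times> {1..n}"
    and "\<forall>i. (i, i) \<notin> A"
    and "\<forall>i \<in> {1..n}. q i \<ge> 1"
  shows "int (opt_len n q A) \<ge>
           (\<Sum>k \<in> {1..n}. int (q k)) - (\<Sum>i \<in> leaf_vertices n A. int (q i))
           - (\<Sum>S \<in> {S. is_leaf_scc n A S}. int (Min (q ` S)))"
proof -
  define LS where "LS = {S. is_leaf_scc n A S}"
  have LS: "\<forall>S \<in> LS. S \<noteq> {} \<and> S \<subseteq> {1..n}"
    unfolding LS_def using leaf_scc_nonempty_subset by blast
  then obtain m where m: "\<forall>S \<in> LS. m S \<in> S \<and> q (m S) = Min (q ` S)"
    using finite_subset[of _ "{1..n}"] by (metis Min_witness_choice finite_atLeastAtMost)
  define R where "R = leaf_vertices n A \<union> m ` LS"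
  have "R \<subseteq> {1..n}" using m LS unfolding R_def leaf_vertices_def by blast
  moreover have "\<forall>u\<in>{1..n}. \<exists>r\<in>R. (u, r) \<in> A\<^sup>*"
    using reaches_leaf_or_leaf_scc_representative[OF assms(1,2)] m
    unfolding R_def LS_def by blast
  ultimately have "(\<Sum>k\<in>{1..n}. q k) \<le> opt_len n q A + sum q R"
    by (rule opt_len_lower_bound[OF assms(1)])
  also have "sum q R \<le> (\<Sum>i\<in>leaf_vertices n A. q i) + (\<Sum>S\<in>LS. q (m S))"
    unfolding R_def LS_def by (rule sum_Un_image_le) (simp_all add: leaf_vertices_def finite_leaf_sccs)
  also have "(\<Sum>S\<in>LS. q (m S)) = (\<Sum>S\<in>LS. Min (q ` S))"
    using m by (intro sum.cong) auto
  finally have "int (\<Sum>k\<in>{1..n}. q k)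
      \<le> int (opt_len n q A) + int (\<Sum>i\<in>leaf_vertices n A. q i) + int (\<Sum>S\<in>LS. Min (q ` S))"
    by linarith
  then show ?thesis unfolding LS_def by (simp add: of_nat_sum)
qed

end
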